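(* Let $\mathbf{X}\subseteq\mathbb{N}^n$ be any set. Then $\mathbf{X}$ is hybridlinear if and only if $(\mathbf{X},\le_{\mathbf{P}_{\mathbf{X}}})$ is a well-quasi-order.
   Context: Hybridlinear: $\mathbf{X}=\mathbf{B}+\mathbb{N}(\mathbf{F})$ with $\mathbf{B},\mathbf{F}\subseteq\mathbb{N}^n$ finite (the empty set counts as hybridlinear). A vector $\mathbf{p}\in\mathbb{Z}^n$ is a preservant of $\mathbf{X}$ if $\mathbf{X}+\mathbf{p}\subseteq\mathbf{X}$; $\mathbf{P}_{\mathbf{X}}$ is the set of preservants. For an $\mathbb{N}$-generated set $\mathbf{P}$, $\mathbf{x}\le_{\mathbf{P}}\mathbf{y}$ iff $\mathbf{y}=\mathbf{x}+\mathbf{p}$ for some $\mathbf{p}\in\mathbf{P}$. A partial order is a well-quasi-order if it is well-founded and every subset has finitely many minimal elements. *)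

theory Defs
  imports "HOL-Analysis.Analysis"
begin

text \<open>Vectors of \<nat>^n are modelled as nat ^ 'n, vectors of \<int>^n as int ^ 'n,
  where 'n is an arbitrary finite index type (n = CARD('n)).\<close>

definition int_vec :: "nat ^ 'n \<Rightarrow> int ^ 'n" where
  "int_vec x = (\<chi> i. int (x $ i))"

definition nat_gen :: "(nat ^ 'n) set \<Rightarrow> (nat ^ 'n) set" where
  "nat_gen F = {x. \<exists>c :: nat ^ 'n \<Rightarrow> nat. x = (\<Sum>f\<in>F. c f *s f)}"

definition hybridlinear :: "(nat ^ 'n::finite) set \<Rightarrow> bool" where
  "hybridlinear X \<longleftrightarrow> (\<exists>B F. finite B \<and> finite F \<and>
      X = {b + v | b v. b \<in> B \<and> v \<in> nat_gen F})"

definition preservants :: "(nat ^ 'n::finite) set \<Rightarrow> (int ^ 'n) set" where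
  "preservants X = {p. \<forall>x\<in>X. \<exists>y\<in>X. int_vec y = int_vec x + p}"

definition le_P :: "(int ^ 'n::finite) set \<Rightarrow> nat ^ 'n \<Rightarrow> nat ^ 'n \<Rightarrow> bool" where
  "le_P P x y \<longleftrightarrow> (\<exists>p\<in>P. int_vec y = int_vec x + p)"

definition minimal_in :: "('a \<Rightarrow> 'a \<Rightarrow> bool) \<Rightarrow> 'a set \<Rightarrow> 'a \<Rightarrow> bool" where
  "minimal_in r S m \<longleftrightarrow> m \<in> S \<and> (\<forall>s\<in>S. r s m \<longrightarrow> s = m)"

definition partial_order_on_set :: "'a set \<Rightarrow> ('a \<Rightarrow> 'a \<Rightarrow> bool) \<Rightarrow> bool" where
  "partial_order_on_set A r \<longleftrightarrow>
     (\<forall>x\<in>A. r x x) \<and>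
     (\<forall>x\<in>A. \<forall>y\<in>A. \<forall>z\<in>A. r x y \<longrightarrow> r y z \<longrightarrow> r x z) \<and>
     (\<forall>x\<in>A. \<forall>y\<in>A. r x y \<longrightarrow> r y x \<longrightarrow> x = y)"

definition well_founded_on_set :: "'a set \<Rightarrow> ('a \<Rightarrow> 'a \<Rightarrow> bool) \<Rightarrow> bool" where
  "well_founded_on_set A r \<longleftrightarrow> (\<forall>S\<subseteq>A. S \<noteq> {} \<longrightarrow> (\<exists>m. minimal_in r S m))"

definition wqo_on_set :: "'a set \<Rightarrow> ('a \<Rightarrow> 'a \<Rightarrow> bool) \<Rightarrow> bool" where
  "wqo_on_set A r \<longleftrightarrow> partial_order_on_set A r \<and> well_founded_on_set A r \<and>
     (\<forall>S\<subseteq>A. finite {m. minimal_in r S m})"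

end

theory Submission
  imports Defs
begin

(*
  For nonempty X every preservant is nonnegative, so x \<le>_P y means y = x + q for some q in the
  monoid Q = {q. X + q \<subseteq> X} of natural preservants.
  If X = B + \<nat>(F), then \<nat>(F) \<subseteq> Q, and an antichain inside a coset b + \<nat>(F) pulls back to an
  antichain of coefficient vectors in \<nat>^F, which is finite by Dickson's lemma; the minimal
  elements of any subset of X form such antichains.
  Conversely, if the order is a wqo, every element lies above a minimal element of X, so
  X = min X + Q; and Q is generated by its irreducible elements, which are finitely many because
  their translates by a fixed x \<in> X form an antichain.
*)

definition nat_preservants :: "(nat ^ 'n::finite) set \<Rightarrow> (nat ^ 'n) set" where
  "nat_preservants X = {q. \<forall>x\<in>X. x + q \<in> X}"

definition shift_le :: "'a::plus set \<Rightarrow> 'a \<Rightarrow> 'a \<Rightarrow> bool" where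
  "shift_le Q x y \<longleftrightarrow> (\<exists>q\<in>Q. y = x + q)"

definition add_submonoid :: "'a::monoid_add set \<Rightarrow> bool" where
  "add_submonoid Q \<longleftrightarrow> 0 \<in> Q \<and> (\<forall>p\<in>Q. \<forall>q\<in>Q. p + q \<in> Q)"

definition add_atoms :: "'a::monoid_add set \<Rightarrow> 'a set" where
  "add_atoms Q = {a \<in> Q. a \<noteq> 0 \<and> (\<forall>u\<in>Q. \<forall>v\<in>Q. a = u + v \<longrightarrow> u = 0 \<or> v = 0)}"

lemma int_vec_add: "int_vec (x + y) = int_vec x + int_vec y"
  by (simp add: int_vec_def vec_eq_iff)

lemma int_vec_eq_iff: "int_vec x = int_vec y \<longleftrightarrow> x = y"
  by (simp add: int_vec_def vec_eq_iff)

lemma int_vec_nth: "int_vec x $ i = int (x $ i)"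
  by (simp add: int_vec_def)

lemma preservant_nonneg:
  assumes "X \<noteq> {}" and "p \<in> preservants X"
  shows "0 \<le> p $ i"
proof (rule ccontr)
  assume neg: "\<not> 0 \<le> p $ i"
  \<comment> \<open>translating a point with least i-th coordinate by p would leave X\<close>
  obtain x where "x \<in> X" and least: "\<forall>y. y \<in> X \<longrightarrow> x $ i \<le> y $ i"
    using assms(1) ex_has_least_nat[of "\<lambda>x. x \<in> X" _ "\<lambda>x. x $ i"] by blast
  then obtain y where "y \<in> X" and "int_vec y = int_vec x + p"
    using assms(2) unfolding preservants_def by blast
  then have "int (y $ i) = int (x $ i) + p $ i"
    by (metis int_vec_nth vector_add_component)
  with neg least \<open>y \<in> X\<close> show False by force
qed

lemma preservants_eq_image:
  assumes "X \<noteq> {}"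
  shows "preservants X = int_vec ` nat_preservants X"
proof
  show "int_vec ` nat_preservants X \<subseteq> preservants X"
    unfolding preservants_def nat_preservants_def by (auto simp: int_vec_add[symmetric])
next
  show "preservants X \<subseteq> int_vec ` nat_preservants X"
  proof
    fix p assume p: "p \<in> preservants X"
    define q :: "nat ^ 'a" where "q = (\<chi> i. nat (p $ i))"
    have pq: "p = int_vec q"
      using preservant_nonneg[OF assms p] by (simp add: q_def int_vec_def vec_eq_iff)
    have "q \<in> nat_preservants X"
      using p unfolding preservants_def nat_preservants_def pq
      by (auto simp: int_vec_add[symmetric] int_vec_eq_iff)
    with pq show "p \<in> int_vec ` nat_preservants X" by blast
  qed
qed

lemma le_P_int_vec_image: "le_P (int_vec ` Q) = shift_le Q"
  by (auto simp: fun_eq_iff le_P_def shift_le_def int_vec_add[symmetric] int_vec_eq_iff)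

lemma add_submonoid_nat_preservants: "add_submonoid (nat_preservants X)"
  unfolding add_submonoid_def nat_preservants_def by (simp add: add.assoc[symmetric])

lemma add_submonoid_nat_gen: "add_submonoid (nat_gen F)"
  unfolding add_submonoid_def nat_gen_def
proof (intro conjI ballI; clarify)
  show "\<exists>c. 0 = (\<Sum>f\<in>F. c f *s f)"
    by (intro exI[of _ "\<lambda>_. 0"]) (simp add: vec_eq_iff)
  fix c d
  show "\<exists>e. (\<Sum>f\<in>F. c f *s f) + (\<Sum>f\<in>F. d f *s f) = (\<Sum>f\<in>F. e f *s f)"
    by (intro exI[of _ "\<lambda>f. c f + d f"]) (simp add: sum.distrib)
qed

lemma generator_in_nat_gen:
  assumes "finite F" and "a \<in> F"
  shows "a \<in> nat_gen F"
proof -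
  have "(\<Sum>f\<in>F. (if f = a then 1 else 0) *s f) = (\<Sum>f\<in>F. if f = a then f else 0)"
    by (rule sum.cong) (auto simp: vec_eq_iff)
  also have "\<dots> = a"
    using assms by simp
  finally show ?thesis
    unfolding nat_gen_def by (metis (mono_tags) mem_Collect_eq)
qed

lemma nat_gen_subset:
  assumes "finite F" and "F \<subseteq> Q" and "add_submonoid Q"
  shows "nat_gen F \<subseteq> Q"
proof -
  have smult: "k *s a \<in> Q" if "a \<in> Q" for k :: nat and a
  proof (induction k)
    case 0
    then show ?case using assms(3) by (simp add: add_submonoid_def vec_eq_iff)
  next
    case (Suc k)
    have "Suc k *s a = a + k *s a" by (simp add: vec_eq_iff)
    with Suc that assms(3) show ?case unfolding add_submonoid_def by simp
  qed
  have "(\<Sum>f\<in>G. c f *s f) \<in> Q" if "finite G" "G \<subseteq> F" for G c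
    using that
  proof (induction G rule: finite_induct)
    case (insert a G)
    with smult assms(2,3) show ?case unfolding add_submonoid_def by auto
  qed (use assms(3) in \<open>simp add: add_submonoid_def\<close>)
  with assms(1) show ?thesis unfolding nat_gen_def by blast
qed

lemma component_sum_less:
  fixes u v :: "nat ^ 'n::finite"
  assumes "v \<noteq> 0"
  shows "(\<Sum>i\<in>UNIV. u $ i) < (\<Sum>i\<in>UNIV. (u + v) $ i)"
proof -
  obtain j where "v $ j \<noteq> 0"
    using assms by (auto simp: vec_eq_iff)
  then show ?thesis
    by (intro sum_strict_mono_ex1) auto
qed

lemma well_founded_shift_le: "well_founded_on_set A (shift_le (Q :: (nat ^ 'n::finite) set))"
  unfolding well_founded_on_set_def
proof (intro allI impI)
  fix S assume "S \<subseteq> A" "S \<noteq> {}"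
  then obtain m where "m \<in> S" and least: "\<forall>s. s \<in> S \<longrightarrow> (\<Sum>i\<in>UNIV. m $ i) \<le> (\<Sum>i\<in>UNIV. s $ i)"
    using ex_has_least_nat[of "\<lambda>s. s \<in> S" _ "\<lambda>s. \<Sum>i\<in>UNIV. s $ i"] by blast
  have "s = m" if "s \<in> S" and "shift_le Q s m" for s
    using that least component_sum_less[of _ s] unfolding shift_le_def by force
  with \<open>m \<in> S\<close> show "\<exists>m. minimal_in (shift_le Q) S m"
    unfolding minimal_in_def by blast
qed

lemma partial_order_shift_le:
  fixes Q :: "(nat ^ 'n::finite) set"
  assumes "add_submonoid Q"
  shows "partial_order_on_set A (shift_le Q)"
  unfolding partial_order_on_set_def
proof (intro conjI ballI impI)
  fix x y z assume "shift_le Q x y" "shift_le Q y z"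
  with assms show "shift_le Q x z"
    unfolding shift_le_def add_submonoid_def by (metis add.assoc)
next
  fix x y assume "shift_le Q x y" "shift_le Q y x"
  then obtain p q :: "nat ^ 'n" where "y = x + p" "x = y + q"
    unfolding shift_le_def by blast
  then show "x = y" by (simp add: vec_eq_iff)
qed (use assms in \<open>auto simp: shift_le_def add_submonoid_def intro: bexI[of _ 0]\<close>)

lemma wqo_on_set_antichain_finite:
  assumes "wqo_on_set X r" and "S \<subseteq> X" and "\<forall>x\<in>S. \<forall>y\<in>S. r x y \<longrightarrow> x = y"
  shows "finite S"
proof -
  have "S \<subseteq> {m. minimal_in r S m}"
    using assms(3) unfolding minimal_in_def by blast
  with assms(1,2) show ?thesis
    unfolding wqo_on_set_def using finite_subset by blast
qed

lemma exists_minimal_below: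
  assumes "partial_order_on_set X r" and "well_founded_on_set X r" and "x \<in> X"
  shows "\<exists>m. minimal_in r X m \<and> r m x"
proof -
  have refl: "r x x" and trans: "\<And>s m. s \<in> X \<Longrightarrow> m \<in> X \<Longrightarrow> r s m \<Longrightarrow> r m x \<Longrightarrow> r s x"
    using assms(1,3) unfolding partial_order_on_set_def by blast+
  define S where "S = {s \<in> X. r s x}"
  have "S \<subseteq> X" "x \<in> S"
    using refl assms(3) unfolding S_def by auto
  then obtain m where m: "minimal_in r S m"
    using assms(2) unfolding well_founded_on_set_def by blast
  then have "minimal_in r X m"
    using trans unfolding minimal_in_def S_def by blast
  with m show ?thesis
    unfolding minimal_in_def S_def by blast
qed

lemma nondecreasing_subseq:
  fixes s :: "nat \<Rightarrow> nat"
  obtains f :: "nat \<Rightarrow> nat" where "strict_mono f" "mono (\<lambda>n. s (f n))"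
proof -
  obtain f where f: "strict_mono f" and mono: "monoseq (\<lambda>n. s (f n))"
    using seq_monosub by blast
  show thesis
  proof (cases "mono (\<lambda>n. s (f n))")
    case True
    show thesis using that f True by blast
  next
    case False
    then have dec: "antimono (\<lambda>n. s (f n))"
      using mono unfolding monoseq_def mono_def antimono_def by blast
    obtain N where least: "\<forall>k. s (f N) \<le> s (f k)"
      using ex_has_least_nat[of "\<lambda>_. True" 0 "\<lambda>k. s (f k)"] by blast
    have "s (f (k + N)) = s (f N)" for k
      using antimonoD[OF dec, of N "k + N"] least by (simp add: le_antisym)
    then have "mono (\<lambda>k. s (f (k + N)))" by (simp add: mono_def)
    moreover have "strict_mono (\<lambda>k. f (k + N))"
      using f by (simp add: strict_mono_def)
    ultimately show thesis using that by blast
  qed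
qed

lemma dickson_subseq:
  fixes g :: "nat \<Rightarrow> 'a \<Rightarrow> nat"
  assumes "finite I"
  shows "\<exists>f :: nat \<Rightarrow> nat. strict_mono f \<and> (\<forall>i\<in>I. mono (\<lambda>n. g (f n) i))"
  using assms
proof (induction I rule: finite_induct)
  case empty
  show ?case by (intro exI[of _ id]) (simp add: strict_mono_def)
next
  case (insert a I)
  then obtain f :: "nat \<Rightarrow> nat" where f: "strict_mono f" "\<forall>i\<in>I. mono (\<lambda>n. g (f n) i)"
    by blast
  obtain h :: "nat \<Rightarrow> nat" where h: "strict_mono h" "mono (\<lambda>n. g (f (h n)) a)"
    using nondecreasing_subseq[of "\<lambda>n. g (f n) a"] by blast
  have "mono (\<lambda>n. g (f (h n)) i)" if "i \<in> I" for i
  proof (rule monoI)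
    fix m n :: nat assume "m \<le> n"
    then have "h m \<le> h n"
      using h(1) by (simp add: strict_mono_less_eq)
    then show "g (f (h m)) i \<le> g (f (h n)) i"
      using f(2) that monoD[of "\<lambda>n. g (f n) i"] by blast
  qed
  with h have "strict_mono (f \<circ> h) \<and> (\<forall>i\<in>insert a I. mono (\<lambda>n. g ((f \<circ> h) n) i))"
    using f(1) by (auto intro: strict_mono_o)
  then show ?case by blast
qed

lemma shift_le_nat_gen_coeffs:
  assumes "\<forall>f\<in>F. c f \<le> d f"
  shows "shift_le (nat_gen F) (b + (\<Sum>f\<in>F. c f *s f)) (b + (\<Sum>f\<in>F. d f *s f))"
proof -
  have "(\<Sum>f\<in>F. d f *s f) = (\<Sum>f\<in>F. c f *s f) + (\<Sum>f\<in>F. (d f - c f) *s f)"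
    using assms by (auto simp: sum.distrib[symmetric] vector_sadd_rdistrib[symmetric] intro!: sum.cong)
  then show ?thesis
    unfolding shift_le_def nat_gen_def by (auto simp: add.assoc)
qed

lemma antichain_in_nat_gen_coset_finite:
  assumes "finite F" and "M \<subseteq> (+) b ` nat_gen F"
    and antichain: "\<forall>x\<in>M. \<forall>y\<in>M. shift_le (nat_gen F) x y \<longrightarrow> x = y"
  shows "finite M"
proof (rule ccontr)
  assume "infinite M"
  then obtain g :: "nat \<Rightarrow> _" where g: "inj g" "range g \<subseteq> M"
    using infinite_countable_subset by blast
  have "\<forall>k. \<exists>c. g k = b + (\<Sum>f\<in>F. c f *s f)"
    using g(2) assms(2) unfolding nat_gen_def by blast
  then obtain C where C: "\<And>k. g k = b + (\<Sum>f\<in>F. C k f *s f)"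
    by metis
  obtain h :: "nat \<Rightarrow> nat" where h: "strict_mono h" "\<forall>f\<in>F. mono (\<lambda>n. C (h n) f)"
    using dickson_subseq[OF assms(1), of C] by blast
  have "shift_le (nat_gen F) (g (h 0)) (g (h 1))"
    unfolding C
  proof (intro shift_le_nat_gen_coeffs ballI)
    fix f assume "f \<in> F"
    then show "C (h 0) f \<le> C (h 1) f"
      using monoD[of "\<lambda>n. C (h n) f" 0 1] h(2) by simp
  qed
  then have "g (h 0) = g (h 1)"
    using antichain g(2) by blast
  then show False
    using g(1) h(1) by (simp add: inj_eq strict_mono_eq)
qed

lemma hybridlinear_imp_wqo:
  assumes "hybridlinear X"
  shows "wqo_on_set X (shift_le (nat_preservants X))"
proof -
  obtain B F where "finite B" "finite F" and X: "X = {b + v | b v. b \<in> B \<and> v \<in> nat_gen F}"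
    using assms unfolding hybridlinear_def by blast
  then have X_cosets: "X = (\<Union>b\<in>B. (+) b ` nat_gen F)"
    by auto
  have "w \<in> nat_preservants X" if "w \<in> nat_gen F" for w
    unfolding nat_preservants_def
  proof (intro CollectI ballI)
    fix x assume "x \<in> X"
    then obtain b v where "b \<in> B" "v \<in> nat_gen F" "x = b + v"
      unfolding X by blast
    moreover have "v + w \<in> nat_gen F"
      using add_submonoid_nat_gen \<open>v \<in> nat_gen F\<close> that unfolding add_submonoid_def by blast
    ultimately show "x + w \<in> X"
      unfolding X by (metis (mono_tags, lifting) add.assoc mem_Collect_eq)
  qed
  then have shift_le_mono: "shift_le (nat_gen F) x y \<Longrightarrow> shift_le (nat_preservants X) x y" for x y
    unfolding shift_le_def by blast
  have "finite {m. minimal_in (shift_le (nat_preservants X)) S m}" (is "finite ?M")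
    if "S \<subseteq> X" for S
  proof -
    have "?M \<subseteq> X"
      using that unfolding minimal_in_def by blast
    then have "?M = (\<Union>b\<in>B. ?M \<inter> (+) b ` nat_gen F)"
      unfolding X_cosets Int_UN_distrib[symmetric] by (rule Int_absorb2[symmetric])
    moreover have "finite (?M \<inter> (+) b ` nat_gen F)" for b
    proof (rule antichain_in_nat_gen_coset_finite[OF \<open>finite F\<close> Int_lower2])
      show "\<forall>x\<in>?M \<inter> (+) b ` nat_gen F. \<forall>y\<in>?M \<inter> (+) b ` nat_gen F.
          shift_le (nat_gen F) x y \<longrightarrow> x = y"
        unfolding minimal_in_def using shift_le_mono by blast
    qed
    then have "finite (\<Union>b\<in>B. ?M \<inter> (+) b ` nat_gen F)"
      using \<open>finite B\<close> by blast
    ultimately show ?thesis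
      by (simp only:)
  qed
  then show ?thesis
    unfolding wqo_on_set_def
    by (simp add: partial_order_shift_le add_submonoid_nat_preservants well_founded_shift_le)
qed

lemma nat_gen_add_atoms:
  fixes Q :: "(nat ^ 'n::finite) set"
  assumes "add_submonoid Q" and "finite (add_atoms Q)"
  shows "nat_gen (add_atoms Q) = Q"
proof
  show "nat_gen (add_atoms Q) \<subseteq> Q"
    using assms by (intro nat_gen_subset) (auto simp: add_atoms_def)
next
  have gen: "add_submonoid (nat_gen (add_atoms Q))"
    by (rule add_submonoid_nat_gen)
  show "Q \<subseteq> nat_gen (add_atoms Q)"
  proof
    fix q assume "q \<in> Q"
    then show "q \<in> nat_gen (add_atoms Q)"
    proof (induction q rule: measure_induct_rule[of "\<lambda>q. \<Sum>i\<in>UNIV. q $ i"])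
      case (less q)
      consider "q = 0" | "q \<in> add_atoms Q"
        | u v where "u \<in> Q" "v \<in> Q" "u \<noteq> 0" "v \<noteq> 0" "q = u + v"
        using less.prems unfolding add_atoms_def by auto
      then show ?case
      proof cases
        case 1
        with gen show ?thesis
          unfolding add_submonoid_def by simp
      next
        case 2
        with assms(2) show ?thesis
          by (rule generator_in_nat_gen)
      next
        case 3
        have "(\<Sum>i\<in>UNIV. u $ i) < (\<Sum>i\<in>UNIV. q $ i)"
          using component_sum_less[of v u] 3 by simp
        moreover have "(\<Sum>i\<in>UNIV. v $ i) < (\<Sum>i\<in>UNIV. q $ i)"
          using component_sum_less[of u v] 3 by (simp add: add.commute)
        ultimately have "u \<in> nat_gen (add_atoms Q)" "v \<in> nat_gen (add_atoms Q)"
          using less.IH 3 by blast+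
        with gen \<open>q = u + v\<close> show ?thesis
          unfolding add_submonoid_def by blast
      qed
    qed
  qed
qed

lemma wqo_finite_add_atoms:
  assumes "x \<in> X" and "wqo_on_set X (shift_le (nat_preservants X))"
  shows "finite (add_atoms (nat_preservants X))"
proof -
  let ?A = "add_atoms (nat_preservants X)"
  have "finite ((+) x ` ?A)"
  proof (rule wqo_on_set_antichain_finite[OF assms(2)])
    show "(+) x ` ?A \<subseteq> X"
      using assms(1) unfolding add_atoms_def nat_preservants_def by blast
    have "a' = a" if "a \<in> ?A" "a' \<in> ?A" "a = a' + q" "q \<in> nat_preservants X" for a a' q
      using that unfolding add_atoms_def by auto
    then show "\<forall>y\<in>(+) x ` ?A. \<forall>z\<in>(+) x ` ?A. shift_le (nat_preservants X) y z \<longrightarrow> y = z"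
      unfolding shift_le_def by (auto simp: add.assoc)
  qed
  then show ?thesis
    by (rule finite_imageD) (simp add: inj_on_def)
qed

lemma wqo_imp_hybridlinear:
  assumes "X \<noteq> {}" and wqo: "wqo_on_set X (shift_le (nat_preservants X))"
  shows "hybridlinear X"
proof -
  let ?Q = "nat_preservants X"
  have po: "partial_order_on_set X (shift_le ?Q)" and wf: "well_founded_on_set X (shift_le ?Q)"
    using wqo unfolding wqo_on_set_def by blast+
  define B where "B = {m. minimal_in (shift_le ?Q) X m}"
  have "finite B"
    using wqo unfolding wqo_on_set_def B_def by blast
  have "finite (add_atoms ?Q)"
    using assms wqo_finite_add_atoms by blast
  then have gen: "nat_gen (add_atoms ?Q) = ?Q"
    by (simp add: nat_gen_add_atoms add_submonoid_nat_preservants)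
  have "X = {b + v | b v. b \<in> B \<and> v \<in> nat_gen (add_atoms ?Q)}"
    unfolding gen
  proof
    show "X \<subseteq> {b + v | b v. b \<in> B \<and> v \<in> ?Q}"
    proof
      fix x assume "x \<in> X"
      then obtain m where "minimal_in (shift_le ?Q) X m" "shift_le ?Q m x"
        using exists_minimal_below[OF po wf] by blast
      then show "x \<in> {b + v | b v. b \<in> B \<and> v \<in> ?Q}"
        unfolding B_def shift_le_def by blast
    qed
    show "{b + v | b v. b \<in> B \<and> v \<in> ?Q} \<subseteq> X"
      unfolding B_def minimal_in_def nat_preservants_def by blast
  qed
  with \<open>finite B\<close> \<open>finite (add_atoms ?Q)\<close> show ?thesis
    unfolding hybridlinear_def by blast
qed

theorem mainTheorem14:
  fixes X :: "(nat ^ 'n::finite) set"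
  shows "hybridlinear X \<longleftrightarrow> wqo_on_set X (le_P (preservants X))"
proof (cases "X = {}")
  case True
  \<comment> \<open>here every vector is a preservant, but both sides hold vacuously\<close>
  have "hybridlinear X"
    unfolding True hybridlinear_def by (intro exI[of _ "{}"]) auto
  moreover have "wqo_on_set X r" for r :: "nat ^ 'n \<Rightarrow> nat ^ 'n \<Rightarrow> bool"
    unfolding True wqo_on_set_def partial_order_on_set_def well_founded_on_set_def minimal_in_def
    by auto
  ultimately show ?thesis by blast
next
  case False
  then have "le_P (preservants X) = shift_le (nat_preservants X)"
    by (simp add: preservants_eq_image le_P_int_vec_image)
  with False show ?thesis
    using hybridlinear_imp_wqo wqo_imp_hybridlinear by metis
qed

end
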